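(* Let $(\mathfrak{g}_\sigma,\mathfrak{q})$ be a $CR$-algebra and let $Z\in\sigma(\mathfrak{q})\setminus\mathfrak{q}$ have finite Levi-order $k$. Let $(Z_1,\dots,Z_k)$ be a Levi-sequence for $Z$ of minimal length $k$. Then: (i) $Z_i\in\mathfrak{q}\setminus\sigma(\mathfrak{q})$ for $1\le i\le k$; (ii) if $k>1$, then $[Z,Z_i]\in(\mathfrak{q}+\sigma(\mathfrak{q}))\setminus\mathfrak{q}$ for every $i$; (iii) for every permutation $(i_1,\dots,i_k)$ of $(1,\dots,k)$, the sequence $(Z_{i_1},\dots,Z_{i_k})$ is again a Levi-sequence for $Z$.
   Context: $\mathfrak{g}$ is a finite-dimensional complex Lie algebra, $\sigma$ an anti-$\mathbb{C}$-linear involution of $\mathfrak{g}$, $\mathfrak{g}_\sigma$ its fixed point set (a real form of $\mathfrak{g}$). A $CR$-algebra is a pair $(\mathfrak{g}_\sigma,\mathfrak{q})$ with $\mathfrak{q}$ a complex Lie subalgebra of $\mathfrak{g}$. Higher order commutators are defined recursively by $[X_1,\dots,X_{h-1},X_h]=[[X_1,\dots,X_{h-1}],X_h]$. For $Z\in\sigma(\mathfrak{q})\setminus\mathfrak{q}$, a Levi-sequence for $Z$ is a finite sequence $(Z_1,\dots,Z_k)$ of elements of $\mathfrak{q}$ with $[Z,Z_1,\dots,Z_k]\notin\mathfrak{q}+\sigma(\mathfrak{q})$; $Z$ has finite Levi-order if it admits a Levi-sequence, and its Levi-order is the minimal length of its Levi-sequences. *)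

theory Defs
  imports "HOL-Analysis.Analysis" "HOL-Combinatorics.Permutations"
begin

definition complex_lie_algebra ::
  "(complex \<Rightarrow> 'g::ab_group_add \<Rightarrow> 'g) \<Rightarrow> ('g \<Rightarrow> 'g \<Rightarrow> 'g) \<Rightarrow> bool" where
  "complex_lie_algebra sc br \<longleftrightarrow>
     (\<exists>B. finite_dimensional_vector_space sc B) \<and>
     (\<forall>x y z. br (x + y) z = br x z + br y z) \<and>
     (\<forall>x y z. br x (y + z) = br x y + br x z) \<and>
     (\<forall>c x y. br (sc c x) y = sc c (br x y)) \<and>
     (\<forall>c x y. br x (sc c y) = sc c (br x y)) \<and>
     (\<forall>x. br x x = 0) \<and>
     (\<forall>x y z. br x (br y z) + br y (br z x) + br z (br x y) = 0)"

definition anti_linear_involution ::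
  "(complex \<Rightarrow> 'g::ab_group_add \<Rightarrow> 'g) \<Rightarrow> ('g \<Rightarrow> 'g \<Rightarrow> 'g) \<Rightarrow> ('g \<Rightarrow> 'g) \<Rightarrow> bool" where
  "anti_linear_involution sc br \<sigma> \<longleftrightarrow>
     (\<forall>x y. \<sigma> (x + y) = \<sigma> x + \<sigma> y) \<and>
     (\<forall>c x. \<sigma> (sc c x) = sc (cnj c) (\<sigma> x)) \<and>
     (\<forall>x. \<sigma> (\<sigma> x) = x) \<and>
     (\<forall>x y. \<sigma> (br x y) = br (\<sigma> x) (\<sigma> y))"

definition lie_subalgebra ::
  "(complex \<Rightarrow> 'g::ab_group_add \<Rightarrow> 'g) \<Rightarrow> ('g \<Rightarrow> 'g \<Rightarrow> 'g) \<Rightarrow> 'g set \<Rightarrow> bool" where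
  "lie_subalgebra sc br q \<longleftrightarrow>
     module.subspace sc q \<and> (\<forall>x\<in>q. \<forall>y\<in>q. br x y \<in> q)"

definition iter_comm :: "('g \<Rightarrow> 'g \<Rightarrow> 'g) \<Rightarrow> 'g \<Rightarrow> 'g list \<Rightarrow> 'g" where
  "iter_comm br Z zs = foldl br Z zs"

definition q_plus_sq :: "('g::ab_group_add \<Rightarrow> 'g) \<Rightarrow> 'g set \<Rightarrow> 'g set" where
  "q_plus_sq \<sigma> q = {a + b | a b. a \<in> q \<and> b \<in> \<sigma> ` q}"

definition levi_sequence ::
  "('g::ab_group_add \<Rightarrow> 'g \<Rightarrow> 'g) \<Rightarrow> ('g \<Rightarrow> 'g) \<Rightarrow> 'g set \<Rightarrow> 'g \<Rightarrow> 'g list \<Rightarrow> bool" where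
  "levi_sequence br \<sigma> q Z zs \<longleftrightarrow>
     set zs \<subseteq> q \<and> iter_comm br Z zs \<notin> q_plus_sq \<sigma> q"

definition finite_levi_order ::
  "('g::ab_group_add \<Rightarrow> 'g \<Rightarrow> 'g) \<Rightarrow> ('g \<Rightarrow> 'g) \<Rightarrow> 'g set \<Rightarrow> 'g \<Rightarrow> bool" where
  "finite_levi_order br \<sigma> q Z \<longleftrightarrow> (\<exists>zs. levi_sequence br \<sigma> q Z zs)"

definition levi_order ::
  "('g::ab_group_add \<Rightarrow> 'g \<Rightarrow> 'g) \<Rightarrow> ('g \<Rightarrow> 'g) \<Rightarrow> 'g set \<Rightarrow> 'g \<Rightarrow> nat" where
  "levi_order br \<sigma> q Z = (LEAST k. \<exists>zs. levi_sequence br \<sigma> q Z zs \<and> length zs = k)"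

end

theory Submission
  imports Defs
begin

text \<open>Write V = q + \<sigma>(q) and let k be the Levi order of Z. By the Jacobi identity, swapping two
  adjacent entries of [Z, Z_1, ..., Z_k] changes it by a commutator with k - 1 entries
  in q, which lies in V by minimality of k. Hence [Z, Z_1, ..., Z_k] mod V is symmetric
  in the Z_i, which is (iii). Moving Z_i to the end gives (i): if Z_i were in
  q \<inter> \<sigma>(q), bracketing the shorter commutator, which lies in V, with Z_i would stay in V.
  Moving Z_i to the front gives (ii): if [Z, Z_i] were in q, so would be the whole
  commutator.\<close>

lemma iter_comm_append: "iter_comm br Z (xs @ ys) = iter_comm br (iter_comm br Z xs) ys"
  by (simp add: iter_comm_def)

lemma iter_comm_Nil [simp]: "iter_comm br Z [] = Z"
  by (simp add: iter_comm_def)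

lemma iter_comm_Cons [simp]: "iter_comm br Z (a # xs) = iter_comm br (br Z a) xs"
  by (simp add: iter_comm_def)

lemma not_levi_sequence_if_shorter:
  "length ws < levi_order br \<sigma> q Z \<Longrightarrow> \<not> levi_sequence br \<sigma> q Z ws"
  unfolding levi_order_def by (auto dest: not_less_Least)

locale cr_algebra =
  fixes sc :: "complex \<Rightarrow> 'g::ab_group_add \<Rightarrow> 'g"
    and br :: "'g \<Rightarrow> 'g \<Rightarrow> 'g"
    and \<sigma> :: "'g \<Rightarrow> 'g"
    and q :: "'g set"
  assumes lie_algebra: "complex_lie_algebra sc br"
    and involution: "anti_linear_involution sc br \<sigma>"
    and subalgebra: "lie_subalgebra sc br q"
begin

lemma additive_bracket_left: "Modules.additive (\<lambda>x. br x y)"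
  using lie_algebra by (simp add: Modules.additive_def complex_lie_algebra_def)

lemma additive_bracket_right: "Modules.additive (br x)"
  using lie_algebra by (simp add: Modules.additive_def complex_lie_algebra_def)

lemma bracket_self [simp]: "br x x = 0"
  using lie_algebra by (simp add: complex_lie_algebra_def)

lemma jacobi: "br x (br y z) + br y (br z x) + br z (br x y) = 0"
  using lie_algebra by (simp add: complex_lie_algebra_def)

lemma additive_sigma: "Modules.additive \<sigma>"
  using involution by (simp add: Modules.additive_def anti_linear_involution_def)

lemma sigma_bracket: "\<sigma> (br x y) = br (\<sigma> x) (\<sigma> y)"
  using involution by (simp add: anti_linear_involution_def)

lemma bracket_antisym: "br y x = - br x y"
proof -
  have "0 = br (x + y) (x + y)" by simp
  also have "\<dots> = br x x + br y x + (br x y + br y y)"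
    by (simp only: additive.add[OF additive_bracket_left] additive.add[OF additive_bracket_right])
  also have "\<dots> = br x y + br y x" by simp
  finally show ?thesis by (simp add: eq_neg_iff_add_eq_0 add.commute)
qed

lemma bracket_commutator_right: "br (br x a) b - br (br x b) a = br x (br a b)"
proof -
  have "br a (br b x) = br (br x b) a"
    using bracket_antisym[of "br b x" a] bracket_antisym[of x b]
    by (simp add: additive.minus[OF additive_bracket_left])
  moreover have "br b (br x a) = - br (br x a) b" by (rule bracket_antisym)
  ultimately show ?thesis using jacobi[of x a b] by (simp add: algebra_simps)
qed

lemma iter_comm_diff: "iter_comm br x ys - iter_comm br y ys = iter_comm br (x - y) ys"
  by (induction ys arbitrary: x y) (simp_all add: additive.diff[OF additive_bracket_left])

lemma iter_comm_swap:
  "iter_comm br Z (p @ a # b # s) - iter_comm br Z (p @ b # a # s) = iter_comm br Z (p @ br a b # s)"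
  using iter_comm_diff[of "br (br (iter_comm br Z p) a) b" s "br (br (iter_comm br Z p) b) a"]
  by (simp add: iter_comm_append bracket_commutator_right)

lemma subspace_q: "module.subspace sc q"
  using subalgebra by (simp add: lie_subalgebra_def)

lemma module_sc: "module sc"
  using lie_algebra
  by (auto simp: complex_lie_algebra_def finite_dimensional_vector_space_def module_iff_vector_space)

lemma zero_in_q: "0 \<in> q"
  using module.subspace_0[OF module_sc subspace_q] .

lemma add_in_q: "x \<in> q \<Longrightarrow> y \<in> q \<Longrightarrow> x + y \<in> q"
  using module.subspace_add[OF module_sc subspace_q] .

lemma diff_in_q: "x \<in> q \<Longrightarrow> y \<in> q \<Longrightarrow> x - y \<in> q"
  using module.subspace_diff[OF module_sc subspace_q] .

lemma bracket_in_q: "x \<in> q \<Longrightarrow> y \<in> q \<Longrightarrow> br x y \<in> q"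
  using subalgebra by (simp add: lie_subalgebra_def)

lemma iter_comm_in_q: "x \<in> q \<Longrightarrow> set ys \<subseteq> q \<Longrightarrow> iter_comm br x ys \<in> q"
  by (induction ys arbitrary: x) (simp_all add: bracket_in_q)

lemma in_q_plus_sq_iff: "x \<in> q_plus_sq \<sigma> q \<longleftrightarrow> (\<exists>a\<in>q. \<exists>b\<in>q. x = a + \<sigma> b)"
  by (auto simp: q_plus_sq_def)

lemma q_subset_q_plus_sq: "q \<subseteq> q_plus_sq \<sigma> q"
  using zero_in_q additive.zero[OF additive_sigma] by (force simp: in_q_plus_sq_iff)

lemma add_in_q_plus_sq:
  assumes "x \<in> q_plus_sq \<sigma> q" and "y \<in> q_plus_sq \<sigma> q"
  shows "x + y \<in> q_plus_sq \<sigma> q"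
proof -
  obtain a b c d where q: "a \<in> q" "b \<in> q" "c \<in> q" "d \<in> q"
    and "x = a + \<sigma> b" "y = c + \<sigma> d"
    using assms by (auto simp: in_q_plus_sq_iff)
  then have "x + y = (a + c) + \<sigma> (b + d)"
    by (simp add: additive.add[OF additive_sigma] algebra_simps)
  then show ?thesis
    unfolding in_q_plus_sq_iff using q add_in_q by blast
qed

lemma diff_in_q_plus_sq:
  assumes "x \<in> q_plus_sq \<sigma> q" and "y \<in> q_plus_sq \<sigma> q"
  shows "x - y \<in> q_plus_sq \<sigma> q"
proof -
  obtain a b c d where q: "a \<in> q" "b \<in> q" "c \<in> q" "d \<in> q"
    and "x = a + \<sigma> b" "y = c + \<sigma> d"
    using assms by (auto simp: in_q_plus_sq_iff)
  then have "x - y = (a - c) + \<sigma> (b - d)"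
    by (simp add: additive.diff[OF additive_sigma] algebra_simps)
  then show ?thesis
    unfolding in_q_plus_sq_iff using q diff_in_q by blast
qed

lemma q_plus_sq_diff_trans:
  assumes "x - y \<in> q_plus_sq \<sigma> q" and "y - z \<in> q_plus_sq \<sigma> q"
  shows "x - z \<in> q_plus_sq \<sigma> q"
  using add_in_q_plus_sq[OF assms] by simp

lemma q_plus_sq_cong_iff:
  assumes "x - y \<in> q_plus_sq \<sigma> q"
  shows "x \<in> q_plus_sq \<sigma> q \<longleftrightarrow> y \<in> q_plus_sq \<sigma> q"
  using add_in_q_plus_sq[OF _ assms, of y] diff_in_q_plus_sq[OF _ assms, of x] by auto

lemma bracket_in_q_plus_sq:
  assumes "x \<in> q_plus_sq \<sigma> q" and "c \<in> q" and "c \<in> \<sigma> ` q"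
  shows "br x c \<in> q_plus_sq \<sigma> q"
proof -
  obtain a b where "a \<in> q" "b \<in> q" "x = a + \<sigma> b"
    using assms(1) by (auto simp: in_q_plus_sq_iff)
  moreover obtain d where "d \<in> q" "c = \<sigma> d"
    using assms(3) by auto
  ultimately have "br x c = br a c + \<sigma> (br b d)"
    by (simp add: additive.add[OF additive_bracket_left] sigma_bracket)
  then show ?thesis
    using \<open>a \<in> q\<close> \<open>b \<in> q\<close> \<open>d \<in> q\<close> assms(2) bracket_in_q by (auto simp: in_q_plus_sq_iff)
qed

lemma iter_comm_swap_cong:
  assumes "set (p @ a # b # s) \<subseteq> q" and "length (p @ a # b # s) \<le> levi_order br \<sigma> q Z"
  shows "iter_comm br Z (p @ a # b # s) - iter_comm br Z (p @ b # a # s) \<in> q_plus_sq \<sigma> q"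
proof -
  have "\<not> levi_sequence br \<sigma> q Z (p @ br a b # s)"
    using assms(2) by (intro not_levi_sequence_if_shorter) simp
  then show ?thesis
    using assms(1) bracket_in_q by (simp add: iter_comm_swap levi_sequence_def)
qed

lemma iter_comm_move_cong:
  "set (p @ a # m @ s) \<subseteq> q \<Longrightarrow> length (p @ a # m @ s) \<le> levi_order br \<sigma> q Z \<Longrightarrow>
    iter_comm br Z (p @ a # m @ s) - iter_comm br Z (p @ m @ a # s) \<in> q_plus_sq \<sigma> q"
proof (induction m arbitrary: p)
  case Nil
  then show ?case using zero_in_q q_subset_q_plus_sq by auto
next
  case (Cons b m)
  have "iter_comm br Z (p @ a # b # m @ s) - iter_comm br Z (p @ b # a # m @ s) \<in> q_plus_sq \<sigma> q"
    using Cons.prems by (intro iter_comm_swap_cong) auto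
  moreover have "iter_comm br Z (p @ b # a # m @ s) - iter_comm br Z (p @ b # m @ a # s) \<in> q_plus_sq \<sigma> q"
    using Cons.prems Cons.IH[of "p @ [b]"] by simp
  ultimately have "iter_comm br Z (p @ a # b # m @ s) - iter_comm br Z (p @ b # m @ a # s)
      \<in> q_plus_sq \<sigma> q"
    by (rule q_plus_sq_diff_trans)
  then show ?case by simp
qed

lemma iter_comm_perm_cong:
  "mset xs = mset ys \<Longrightarrow> set (xs @ ts) \<subseteq> q \<Longrightarrow> length (xs @ ts) \<le> levi_order br \<sigma> q Z \<Longrightarrow>
    iter_comm br Z (xs @ ts) - iter_comm br Z (ys @ ts) \<in> q_plus_sq \<sigma> q"
proof (induction ys arbitrary: xs ts rule: rev_induct)
  case Nil
  then show ?case using zero_in_q q_subset_q_plus_sq by auto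
next
  case (snoc a ys)
  have "a \<in> set xs"
    using mset_eq_setD[OF snoc.prems(1)] by simp
  then obtain xs1 xs2 where xs: "xs = xs1 @ a # xs2"
    by (meson split_list)
  have "iter_comm br Z (xs @ ts) - iter_comm br Z (xs1 @ xs2 @ a # ts) \<in> q_plus_sq \<sigma> q"
    using snoc.prems xs iter_comm_move_cong[of xs1 a xs2 ts] by simp
  moreover have "iter_comm br Z (xs1 @ xs2 @ a # ts) - iter_comm br Z (ys @ a # ts) \<in> q_plus_sq \<sigma> q"
    using snoc.prems xs snoc.IH[of "xs1 @ xs2" "a # ts"] by simp
  ultimately have "iter_comm br Z (xs @ ts) - iter_comm br Z (ys @ a # ts) \<in> q_plus_sq \<sigma> q"
    by (rule q_plus_sq_diff_trans)
  then show ?case by simp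
qed

lemma minimal_levi_sequence_perm:
  assumes "levi_sequence br \<sigma> q Z zs" and "length zs = levi_order br \<sigma> q Z"
    and "mset ys = mset zs"
  shows "levi_sequence br \<sigma> q Z ys"
proof -
  have "set ys = set zs" using assms(3) by (rule mset_eq_setD)
  then have ys_q: "set ys \<subseteq> q" using assms(1) by (simp add: levi_sequence_def)
  have cong: "iter_comm br Z ys - iter_comm br Z zs \<in> q_plus_sq \<sigma> q"
    using iter_comm_perm_cong[OF assms(3), of "[]"] ys_q assms(2,3)
    by (simp flip: size_mset)
  then have "iter_comm br Z ys \<notin> q_plus_sq \<sigma> q"
    using assms(1) by (simp add: q_plus_sq_cong_iff[OF cong] levi_sequence_def)
  then show ?thesis using ys_q by (simp add: levi_sequence_def)
qed

lemma minimal_levi_sequence_notin_sigma: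
  assumes "levi_sequence br \<sigma> q Z zs" and "length zs = levi_order br \<sigma> q Z" and "c \<in> set zs"
  shows "c \<notin> \<sigma> ` q"
proof
  assume c_sigma: "c \<in> \<sigma> ` q"
  let ?rest = "remove1 c zs"
  have zs_q: "set zs \<subseteq> q"
    using assms(1) by (simp add: levi_sequence_def)
  have "length ?rest < levi_order br \<sigma> q Z"
    using assms(2) length_pos_if_in_set[OF assms(3)] by (simp add: length_remove1 assms(3))
  then have "\<not> levi_sequence br \<sigma> q Z ?rest"
    by (rule not_levi_sequence_if_shorter)
  then have "iter_comm br Z ?rest \<in> q_plus_sq \<sigma> q"
    using zs_q set_remove1_subset[of c zs] by (simp add: levi_sequence_def)
  then have "br (iter_comm br Z ?rest) c \<in> q_plus_sq \<sigma> q"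
    using zs_q assms(3) c_sigma by (intro bracket_in_q_plus_sq) auto
  then have "iter_comm br Z (?rest @ [c]) \<in> q_plus_sq \<sigma> q"
    by (simp add: iter_comm_append)
  moreover have "levi_sequence br \<sigma> q Z (?rest @ [c])"
    using assms(3) by (intro minimal_levi_sequence_perm[OF assms(1,2)]) simp
  ultimately show False
    by (simp add: levi_sequence_def)
qed

lemma minimal_levi_sequence_bracket:
  assumes "levi_sequence br \<sigma> q Z zs" and "length zs = levi_order br \<sigma> q Z" and "c \<in> set zs"
    and "1 < length zs"
  shows "br Z c \<in> q_plus_sq \<sigma> q - q"
proof
  have zs_q: "set zs \<subseteq> q"
    using assms(1) by (simp add: levi_sequence_def)
  have "\<not> levi_sequence br \<sigma> q Z [c]"
    using assms(2,4) by (intro not_levi_sequence_if_shorter) simp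
  then show "br Z c \<in> q_plus_sq \<sigma> q"
    using zs_q assms(3) by (auto simp: levi_sequence_def)
  show "br Z c \<notin> q"
  proof
    assume "br Z c \<in> q"
    then have "iter_comm br Z (c # remove1 c zs) \<in> q"
      using iter_comm_in_q zs_q set_remove1_subset[of c zs] by simp
    moreover have "levi_sequence br \<sigma> q Z (c # remove1 c zs)"
      using assms(3) by (intro minimal_levi_sequence_perm[OF assms(1,2)]) simp
    ultimately show False
      using q_subset_q_plus_sq by (auto simp: levi_sequence_def)
  qed
qed

end

theorem lemma3p8:
  fixes sc :: "complex \<Rightarrow> 'g::ab_group_add \<Rightarrow> 'g"
    and br :: "'g \<Rightarrow> 'g \<Rightarrow> 'g"
    and \<sigma> :: "'g \<Rightarrow> 'g"
    and q :: "'g set"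
    and Z :: 'g
    and zs :: "'g list"
    and k :: nat
  assumes "complex_lie_algebra sc br"
    and "anti_linear_involution sc br \<sigma>"
    and "lie_subalgebra sc br q"
    and "Z \<in> \<sigma> ` q - q"
    and "finite_levi_order br \<sigma> q Z"
    and "levi_order br \<sigma> q Z = k"
    and "levi_sequence br \<sigma> q Z zs"
    and "length zs = k"
  shows "(\<forall>i<k. zs ! i \<in> q - \<sigma> ` q)
    \<and> (k > 1 \<longrightarrow> (\<forall>i<k. br Z (zs ! i) \<in> q_plus_sq \<sigma> q - q))
    \<and> (\<forall>p. p permutes {..<k} \<longrightarrow> levi_sequence br \<sigma> q Z (map (\<lambda>i. zs ! p i) [0..<k]))"
proof -
  interpret cr_algebra sc br \<sigma> q
    using assms(1-3) by unfold_locales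
  have minimal: "length zs = levi_order br \<sigma> q Z"
    using assms(6,8) by simp
  show ?thesis
  proof (intro conjI allI impI)
    fix i assume "i < k"
    then have "zs ! i \<in> set zs" using assms(8) by simp
    then show "zs ! i \<in> q - \<sigma> ` q"
      using assms(7) minimal_levi_sequence_notin_sigma[OF assms(7) minimal]
      by (auto simp: levi_sequence_def)
  next
    fix i assume "1 < k" and "i < k"
    then show "br Z (zs ! i) \<in> q_plus_sq \<sigma> q - q"
      using minimal_levi_sequence_bracket[OF assms(7) minimal] assms(8) by simp
  next
    fix p assume "p permutes {..<k}"
    then have "mset (map (\<lambda>i. zs ! p i) [0..<k]) = mset zs"
      using mset_permute_list[of p zs] assms(8) by (simp add: permute_list_def)
    then show "levi_sequence br \<sigma> q Z (map (\<lambda>i. zs ! p i) [0..<k])"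
      by (rule minimal_levi_sequence_perm[OF assms(7) minimal])
  qed
qed

end
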